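(* Let $\epsilon\ge 0$ and $\delta\in(0,1)$. Let $f_{+,\epsilon}\in\arg\max_{f\in\mathcal{R}(\epsilon)}MR(f)$ and $f_{-,\epsilon}\in\arg\min_{f\in\mathcal{R}(\epsilon)}MR(f)$. Suppose $f_{+,\epsilon}$ and $f_{-,\epsilon}$ each satisfy the bounded individual loss, bounded relative loss and bounded aggregate loss assumptions (with constants $B_{\text{ind}},B_{\text{ref}},b_{\text{orig}},B_{\text{switch}}$). Then $$\mathbb{P}\left(MCR_+(\epsilon)>\widehat{MCR}_+(\epsilon_1)+\mathcal{Q}_1\right)\le\delta,\qquad \mathbb{P}\left(MCR_-(\epsilon)<\widehat{MCR}_-(\epsilon_1)-\mathcal{Q}_1\right)\le\delta,$$ where $\epsilon_1:=\epsilon+2B_{\text{ref}}\sqrt{\frac{\log(3\delta^{-1})}{2n}}$ and $$\mathcal{Q}_1:=\frac{B_{\text{switch}}}{b_{\text{orig}}}-\frac{B_{\text{switch}}-B_{\text{ind}}\sqrt{\frac{\log(6\delta^{-1})}{n}}}{b_{\text{orig}}+B_{\text{ind}}\sqrt{\frac{\log(6\delta^{-1})}{2n}}}.$$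
   Context: Let $Z=(Y,X_1,X_2)$ be a random variable on $\mathcal{Z}=\mathcal{Y}\times\mathcal{X}_1\times\mathcal{X}_2$, $\mathcal{X}=\mathcal{X}_1\times\mathcal{X}_2$. A model class $\mathcal{F}$ is a set of measurable functions $\mathcal{X}\to\mathcal{Y}$; $L:\mathcal{F}\times\mathcal{Z}\to\mathbb{R}_{\ge0}$ is a nonnegative loss. The data are $n\ge2$ i.i.d. copies $(y_i,x_{1,i},x_{2,i})$, $i=1,\dots,n$, of $Z$. Define $e_{\text{orig}}(f)=\mathbb{E}L(f,Z)$; $e_{\text{switch}}(f)=\mathbb{E}L(f,(Y^{(b)},X_1^{(a)},X_2^{(b)}))$ with $Z^{(a)},Z^{(b)}$ independent copies of $Z$; $MR(f)=e_{\text{switch}}(f)/e_{\text{orig}}(f)$. Empirically, $\hat e_{\text{orig}}(f)=\frac1n\sum_i L(f,(y_i,x_{1,i},x_{2,i}))$, $\hat e_{\text{switch}}(f)=\frac{1}{n(n-1)}\sum_i\sum_{j\neq i}L(f,(y_j,x_{1,i},x_{2,j}))$, $\widehat{MR}(f)=\hat e_{\text{switch}}(f)/\hat e_{\text{orig}}(f)$. A reference model $f_{\text{ref}}\in\mathcal{F}$ is fixed in advance (not data dependent). Rashomon sets: $\mathcal{R}(\epsilon)=\{f\in\mathcal{F}:e_{\text{orig}}(f)\le e_{\text{orig}}(f_{\text{ref}})+\epsilon\}$ and $\hat{\mathcal{R}}(\epsilon)=\{f_{\text{ref}}\}\cup\{f\in\mathcal{F}:\hat e_{\text{orig}}(f)\le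 \hat e_{\text{orig}}(f_{\text{ref}})+\epsilon\}$. Model class reliance: $MCR_+(\epsilon)=\max_{f\in\mathcal{R}(\epsilon)}MR(f)$, $MCR_-(\epsilon)=\min_{f\in\mathcal{R}(\epsilon)}MR(f)$, $\widehat{MCR}_+(\epsilon)=\max_{f\in\hat{\mathcal{R}}(\epsilon)}\widehat{MR}(f)$, $\widehat{MCR}_-(\epsilon)=\min_{f\in\hat{\mathcal{R}}(\epsilon)}\widehat{MR}(f)$. Standing assumption: all maxima/minima over these sets exist. Assumptions for a model $f$ (with known constants): bounded individual loss: $0\le L(f,z)\le B_{\text{ind}}$ for all $z\in\mathcal{Z}$; bounded relative loss: $|L(f,z)-L(f_{\text{ref}},z)|\le B_{\text{ref}}$ for all $z\in\mathcal{Z}$; bounded aggregate loss: $\mathbb{P}\{0<b_{\text{orig}}\le\hat e_{\text{orig}}(f)\}=\mathbb{P}\{\hat e_{\text{switch}}(f)\le B_{\text{switch}}\}=1$. *)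

theory Defs
  imports "HOL-Probability.Probability"
begin

definition switch_pt :: "'y \<times> 'x1 \<times> 'x2 \<Rightarrow> 'y \<times> 'x1 \<times> 'x2 \<Rightarrow> 'y \<times> 'x1 \<times> 'x2" where
  "switch_pt za zb = (fst zb, fst (snd za), snd (snd zb))"

definition e_orig :: "('y \<times> 'x1 \<times> 'x2) measure \<Rightarrow> ('f \<Rightarrow> 'y \<times> 'x1 \<times> 'x2 \<Rightarrow> real) \<Rightarrow> 'f \<Rightarrow> real" where
  "e_orig D L f = (\<integral>z. L f z \<partial>D)"

definition e_switch :: "('y \<times> 'x1 \<times> 'x2) measure \<Rightarrow> ('f \<Rightarrow> 'y \<times> 'x1 \<times> 'x2 \<Rightarrow> real) \<Rightarrow> 'f \<Rightarrow> real" where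
  "e_switch D L f = (\<integral>p. L f (switch_pt (fst p) (snd p)) \<partial>(D \<Otimes>\<^sub>M D))"

definition MR :: "('y \<times> 'x1 \<times> 'x2) measure \<Rightarrow> ('f \<Rightarrow> 'y \<times> 'x1 \<times> 'x2 \<Rightarrow> real) \<Rightarrow> 'f \<Rightarrow> real" where
  "MR D L f = e_switch D L f / e_orig D L f"

definition rashomon :: "'f set \<Rightarrow> ('y \<times> 'x1 \<times> 'x2) measure \<Rightarrow> ('f \<Rightarrow> 'y \<times> 'x1 \<times> 'x2 \<Rightarrow> real) \<Rightarrow> 'f \<Rightarrow> real \<Rightarrow> 'f set" where
  "rashomon F D L fref eps = {f \<in> F. e_orig D L f \<le> e_orig D L fref + eps}"

definition MCR_plus :: "'f set \<Rightarrow> ('y \<times> 'x1 \<times> 'x2) measure \<Rightarrow> ('f \<Rightarrow> 'y \<times> 'x1 \<times> 'x2 \<Rightarrow> real) \<Rightarrow> 'f \<Rightarrow> real \<Rightarrow> real" where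
  "MCR_plus F D L fref eps = (SUP f \<in> rashomon F D L fref eps. MR D L f)"

definition MCR_minus :: "'f set \<Rightarrow> ('y \<times> 'x1 \<times> 'x2) measure \<Rightarrow> ('f \<Rightarrow> 'y \<times> 'x1 \<times> 'x2 \<Rightarrow> real) \<Rightarrow> 'f \<Rightarrow> real \<Rightarrow> real" where
  "MCR_minus F D L fref eps = (INF f \<in> rashomon F D L fref eps. MR D L f)"

definition emp_orig :: "nat \<Rightarrow> ('f \<Rightarrow> 'y \<times> 'x1 \<times> 'x2 \<Rightarrow> real) \<Rightarrow> (nat \<Rightarrow> 'w \<Rightarrow> 'y \<times> 'x1 \<times> 'x2) \<Rightarrow> 'f \<Rightarrow> 'w \<Rightarrow> real" where
  "emp_orig n L Z f w = (\<Sum>i<n. L f (Z i w)) / real n"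

definition emp_switch :: "nat \<Rightarrow> ('f \<Rightarrow> 'y \<times> 'x1 \<times> 'x2 \<Rightarrow> real) \<Rightarrow> (nat \<Rightarrow> 'w \<Rightarrow> 'y \<times> 'x1 \<times> 'x2) \<Rightarrow> 'f \<Rightarrow> 'w \<Rightarrow> real" where
  "emp_switch n L Z f w =
     (\<Sum>i<n. \<Sum>j\<in>{..<n} - {i}. L f (switch_pt (Z i w) (Z j w))) / (real n * (real n - 1))"

definition emp_MR :: "nat \<Rightarrow> ('f \<Rightarrow> 'y \<times> 'x1 \<times> 'x2 \<Rightarrow> real) \<Rightarrow> (nat \<Rightarrow> 'w \<Rightarrow> 'y \<times> 'x1 \<times> 'x2) \<Rightarrow> 'f \<Rightarrow> 'w \<Rightarrow> real" where
  "emp_MR n L Z f w = emp_switch n L Z f w / emp_orig n L Z f w"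

definition emp_rashomon :: "'f set \<Rightarrow> nat \<Rightarrow> ('f \<Rightarrow> 'y \<times> 'x1 \<times> 'x2 \<Rightarrow> real) \<Rightarrow> (nat \<Rightarrow> 'w \<Rightarrow> 'y \<times> 'x1 \<times> 'x2) \<Rightarrow> 'f \<Rightarrow> real \<Rightarrow> 'w \<Rightarrow> 'f set" where
  "emp_rashomon F n L Z fref eps w =
     insert fref {f \<in> F. emp_orig n L Z f w \<le> emp_orig n L Z fref w + eps}"

definition emp_MCR_plus :: "'f set \<Rightarrow> nat \<Rightarrow> ('f \<Rightarrow> 'y \<times> 'x1 \<times> 'x2 \<Rightarrow> real) \<Rightarrow> (nat \<Rightarrow> 'w \<Rightarrow> 'y \<times> 'x1 \<times> 'x2) \<Rightarrow> 'f \<Rightarrow> real \<Rightarrow> 'w \<Rightarrow> real" where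
  "emp_MCR_plus F n L Z fref eps w = (SUP f \<in> emp_rashomon F n L Z fref eps w. emp_MR n L Z f w)"

definition emp_MCR_minus :: "'f set \<Rightarrow> nat \<Rightarrow> ('f \<Rightarrow> 'y \<times> 'x1 \<times> 'x2 \<Rightarrow> real) \<Rightarrow> (nat \<Rightarrow> 'w \<Rightarrow> 'y \<times> 'x1 \<times> 'x2) \<Rightarrow> 'f \<Rightarrow> real \<Rightarrow> 'w \<Rightarrow> real" where
  "emp_MCR_minus F n L Z fref eps w = (INF f \<in> emp_rashomon F n L Z fref eps w. emp_MR n L Z f w)"

end

theory Submission
  imports Defs
begin

text \<open>
  For a fixed model \<open>f\<close> the population ratio \<open>MR f = e_switch f / e_orig f\<close> and its empirical
  counterpart differ only through the deviations of two averages: the sample mean \<open>emp_orig f\<close>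
  and the U-statistic \<open>emp_switch f\<close> of order two. Hoeffding's inequality controls the sample mean.
  For the U-statistic we use Hoeffding's representation of it as the average, over all permutations
  \<open>\<sigma>\<close> of the sample, of means of the \<open>n div 2\<close> independent terms
  \<open>h (Z (\<sigma> (2 j)), Z (\<sigma> (2 j + 1)))\<close>; by Jensen's inequality its moment generating function is
  at most that of a single such mean, and Chernoff's bound applies. With probability at least
  \<open>1 - 2\<delta>/3\<close> the two deviations are at most \<open>B_ind sqrt (ln (6/\<delta>) / n)\<close> and
  \<open>B_ind sqrt (ln (6/\<delta>) / (2 n))\<close>, which moves the ratio by at most \<open>Q1\<close>; with probability at
  least \<open>1 - \<delta>/3\<close> Hoeffding's inequality for \<open>L f - L fref\<close> puts \<open>f\<close> into the empirical
  Rashomon set of radius \<open>\<epsilon>\<^sub>1\<close>. Applied to the models attaining \<open>MCR_plus\<close> and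
  \<open>MCR_minus\<close>, this compares them with the empirical extremes over that set.
\<close>

section \<open>Statements holding outside a small event\<close>

definition holds_up_to :: "'a measure \<Rightarrow> real \<Rightarrow> ('a \<Rightarrow> bool) \<Rightarrow> bool" where
  "holds_up_to M d P \<longleftrightarrow> (\<exists>A\<in>sets M. measure M A \<le> d \<and> (\<forall>w\<in>space M - A. P w))"

lemma holds_up_to_AE:
  assumes "AE w in M. P w"
  shows "holds_up_to M 0 P"
proof -
  obtain N where "{w \<in> space M. \<not> P w} \<subseteq> N" "emeasure M N = 0" "N \<in> sets M"
    using assms by (rule AE_E)
  then show ?thesis
    unfolding holds_up_to_def by (intro bexI[of _ N]) (auto simp: measure_def)
qed

lemma holds_up_to_complement:
  assumes "{w \<in> space M. P w} \<in> sets M" "measure M {w \<in> space M. P w} \<le> d"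
  shows "holds_up_to M d (\<lambda>w. \<not> P w)"
  unfolding holds_up_to_def using assms by blast

lemma holds_up_to_mono:
  assumes "holds_up_to M d P" "d \<le> d'" "\<And>w. w \<in> space M \<Longrightarrow> P w \<Longrightarrow> Q w"
  shows "holds_up_to M d' Q"
proof -
  obtain A where "A \<in> sets M" "measure M A \<le> d" "\<forall>w\<in>space M - A. P w"
    using assms(1) unfolding holds_up_to_def by blast
  with assms(2,3) show ?thesis
    unfolding holds_up_to_def by (intro bexI[of _ A] conjI) auto
qed

lemma holds_up_to_conj:
  assumes "holds_up_to M d P" "holds_up_to M e Q"
  shows "holds_up_to M (d + e) (\<lambda>w. P w \<and> Q w)"
proof -
  obtain A where A: "A \<in> sets M" "measure M A \<le> d" "\<forall>w\<in>space M - A. P w"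
    using assms(1) unfolding holds_up_to_def by blast
  obtain B where B: "B \<in> sets M" "measure M B \<le> e" "\<forall>w\<in>space M - B. Q w"
    using assms(2) unfolding holds_up_to_def by blast
  have "measure M (A \<union> B) \<le> d + e"
    using measure_Un_le[OF A(1) B(1)] A(2) B(2) by linarith
  with A B show ?thesis
    unfolding holds_up_to_def by (intro bexI[of _ "A \<union> B"] conjI) auto
qed

lemma holds_up_to_exceptional_set:
  assumes "holds_up_to M d (\<lambda>w. \<not> B w)"
  shows "\<exists>A\<in>sets M. {w \<in> space M. B w} \<subseteq> A \<and> measure M A \<le> d"
  using assms unfolding holds_up_to_def by blast

lemma holds_up_to_le_add_of_tail_bound:
  fixes U :: "'a \<Rightarrow> real"
  assumes [measurable]: "U \<in> borel_measurable M"
    and U_le: "\<And>w. U w \<le> hi" and lo_le: "lo \<le> E" and "0 \<le> t" "0 \<le> p"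
    and tail: "lo < hi \<Longrightarrow> t < hi - lo \<Longrightarrow> measure M {w \<in> space M. E + t \<le> U w} \<le> p"
  shows "holds_up_to M p (\<lambda>w. U w \<le> E + t)"
proof (cases "hi - lo \<le> t")
  case True
  have "U w \<le> E + t" for w
    using U_le[of w] lo_le True by linarith
  then have "holds_up_to M 0 (\<lambda>w. U w \<le> E + t)"
    by (intro holds_up_to_AE AE_I2)
  then show ?thesis
    by (rule holds_up_to_mono) (use \<open>0 \<le> p\<close> in auto)
next
  case False
  with \<open>0 \<le> t\<close> have "measure M {w \<in> space M. E + t \<le> U w} \<le> p"
    by (intro tail) auto
  then have "holds_up_to M p (\<lambda>w. \<not> E + t \<le> U w)"
    by (intro holds_up_to_complement) auto
  then show ?thesis
    by (rule holds_up_to_mono) auto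
qed

section \<open>Chernoff bounds for averages\<close>

lemma (in Hoeffding_ineq) Hoeffding_mgf_le:
  assumes l: "l > 0"
  shows "(\<integral>\<^sup>+x. ennreal (exp (l * ((\<Sum>i\<in>I. X i x) - \<mu>))) \<partial>M)
           \<le> ennreal (exp (l\<^sup>2 * (\<Sum>i\<in>I. (b i - a i)\<^sup>2) / 8))"
proof -
  define \<mu>' where "\<mu>' = (\<lambda>i. expectation (X i))"
  have "(\<lambda>x. (\<Sum>i\<in>I. X i x) - \<mu>) = (\<lambda>x. (\<Sum>i\<in>I. X i x - \<mu>' i))"
    by (simp add: \<mu>_def sum_subtractf \<mu>'_def)
  then have "(\<integral>\<^sup>+x. ennreal (exp (l * ((\<Sum>i\<in>I. X i x) - \<mu>))) \<partial>M)
      = (\<integral>\<^sup>+x. ennreal (exp (l * ((\<Sum>i\<in>I. X i x - \<mu>' i)))) \<partial>M)"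
    by (metis (no_types, lifting))
  also have "\<dots> = (\<integral>\<^sup>+x. (\<Prod>i\<in>I. ennreal (exp (l * (X i x - \<mu>' i)))) \<partial>M)"
    by (intro nn_integral_cong)
       (simp_all add: sum_distrib_left ring_distribs exp_diff exp_sum fin prod_ennreal)
  also have "\<dots> = (\<Prod>i\<in>I. \<integral>\<^sup>+x. ennreal (exp (l * (X i x - \<mu>' i))) \<partial>M)"
    by (intro indep_vars_nn_integral fin indep_vars_compose2[OF indep]) auto
  also have "\<dots> \<le> (\<Prod>i\<in>I. ennreal (exp (l\<^sup>2 * (b i - a i)\<^sup>2 / 8)))"
  proof (intro prod_mono_ennreal)
    fix i assume i: "i \<in> I"
    from i interpret interval_bounded_random_variable M "X i" "a i" "b i" ..
    show "(\<integral>\<^sup>+x. ennreal (exp (l * (X i x - \<mu>' i))) \<partial>M) \<le> ennreal (exp (l\<^sup>2 * (b i - a i)\<^sup>2 / 8))"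
      unfolding \<mu>'_def by (rule Hoeffdings_lemma_nn_integral) (use l in auto)
  qed
  also have "\<dots> = ennreal (\<Prod>i\<in>I. exp (l\<^sup>2 * (b i - a i)\<^sup>2 / 8))"
    by (simp add: prod_ennreal prod_nonneg)
  also have "(\<Prod>i\<in>I. exp (l\<^sup>2 * (b i - a i)\<^sup>2 / 8)) = exp (l\<^sup>2 * (\<Sum>i\<in>I. (b i - a i)\<^sup>2) / 8)"
    by (simp add: exp_sum fin sum_distrib_left sum_divide_distrib)
  finally show ?thesis .
qed

lemma (in prob_space) nn_integral_exp_average_le:
  fixes T :: "'i \<Rightarrow> 'a \<Rightarrow> real"
  assumes P: "finite P" "P \<noteq> {}"
    and T[measurable]: "\<And>p. p \<in> P \<Longrightarrow> T p \<in> borel_measurable M"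
    and mgf: "\<And>p. p \<in> P \<Longrightarrow> (\<integral>\<^sup>+x. ennreal (exp (l * T p x)) \<partial>M) \<le> ennreal (exp (l\<^sup>2 * c))"
  shows "(\<integral>\<^sup>+x. ennreal (exp (l * ((\<Sum>p\<in>P. T p x) / card P))) \<partial>M) \<le> ennreal (exp (l\<^sup>2 * c))"
proof -
  define N where "N = real (card P)"
  have N: "N > 0" using P by (simp add: N_def card_gt_0_iff)
  have "(\<integral>\<^sup>+x. ennreal (exp (l * ((\<Sum>p\<in>P. T p x) / card P))) \<partial>M)
      \<le> (\<integral>\<^sup>+x. (\<Sum>p\<in>P. ennreal (exp (l * T p x) / N)) \<partial>M)"
  proof (intro nn_integral_mono)
    fix x
    \<comment> \<open>Jensen's inequality for \<open>exp\<close>\<close>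
    have "exp (l * ((\<Sum>p\<in>P. T p x) / card P)) = exp (\<Sum>p\<in>P. (1 / N) *\<^sub>R (l * T p x))"
      by (simp add: N_def sum_divide_distrib sum_distrib_left)
    also have "\<dots> \<le> (\<Sum>p\<in>P. (1 / N) * exp (l * T p x))"
      by (rule convex_on_sum[OF P, where C=UNIV])
         (use N in \<open>auto simp: N_def convex_on_exp[of 1, simplified]\<close>)
    finally show "ennreal (exp (l * ((\<Sum>p\<in>P. T p x) / card P))) \<le> (\<Sum>p\<in>P. ennreal (exp (l * T p x) / N))"
      using N by (auto simp: sum_ennreal intro!: ennreal_leI)
  qed
  also have "\<dots> = (\<Sum>p\<in>P. ennreal (1 / N) * \<integral>\<^sup>+x. ennreal (exp (l * T p x)) \<partial>M)"
  proof -
    have "(\<integral>\<^sup>+x. (\<Sum>p\<in>P. ennreal (exp (l * T p x) / N)) \<partial>M)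
        = (\<Sum>p\<in>P. \<integral>\<^sup>+x. ennreal (1 / N) * ennreal (exp (l * T p x)) \<partial>M)"
      using N by (subst nn_integral_sum) (auto simp: ennreal_mult[symmetric] intro!: sum.cong nn_integral_cong)
    also have "\<dots> = (\<Sum>p\<in>P. ennreal (1 / N) * \<integral>\<^sup>+x. ennreal (exp (l * T p x)) \<partial>M)"
      by (intro sum.cong refl nn_integral_cmult) auto
    finally show ?thesis .
  qed
  also have "\<dots> \<le> (\<Sum>p\<in>P. ennreal (1 / N) * ennreal (exp (l\<^sup>2 * c)))"
    by (intro sum_mono mult_left_mono mgf) auto
  also have "\<dots> = ennreal (\<Sum>p\<in>P. (1 / N) * exp (l\<^sup>2 * c))"
    using N by (subst sum_ennreal[symmetric]) (auto simp: ennreal_mult[symmetric])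
  also have "(\<Sum>p\<in>P. (1 / N) * exp (l\<^sup>2 * c)) = exp (l\<^sup>2 * c)"
    using N by (simp add: N_def)
  finally show ?thesis .
qed

lemma (in prob_space) prob_average_ge_le_exp:
  fixes T :: "'i \<Rightarrow> 'a \<Rightarrow> real"
  assumes P: "finite P" "P \<noteq> {}"
    and T[measurable]: "\<And>p. p \<in> P \<Longrightarrow> T p \<in> borel_measurable M"
    and mgf: "\<And>p l. p \<in> P \<Longrightarrow> l > 0 \<Longrightarrow>
               (\<integral>\<^sup>+x. ennreal (exp (l * T p x)) \<partial>M) \<le> ennreal (exp (l\<^sup>2 * c))"
    and c: "c > 0" and t: "t \<ge> 0"
  shows "prob {x\<in>space M. t \<le> (\<Sum>p\<in>P. T p x) / card P} \<le> exp (- t\<^sup>2 / (4 * c))"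
proof (cases "t = 0")
  case True
  then show ?thesis by simp
next
  case False
  with t have t: "t > 0" by simp
  define l where "l = t / (2 * c)"
  have l: "l > 0" using t c by (simp add: l_def)
  define U where "U = (\<lambda>x. (\<Sum>p\<in>P. T p x) / card P)"
  have U[measurable]: "U \<in> borel_measurable M"
    unfolding U_def using T by (intro borel_measurable_divide borel_measurable_sum) auto
  have "ennreal (prob {x\<in>space M. t \<le> U x}) = emeasure M {x\<in>space M. t \<le> U x}"
    by (simp add: emeasure_eq_measure)
  also have "\<dots> \<le> ennreal (exp (-l * t)) * (\<integral>\<^sup>+x\<in>space M. exp (l * U x) \<partial>M)"
    by (intro Chernoff_ineq_nn_integral_ge l) auto
  also have "(\<integral>\<^sup>+x\<in>space M. exp (l * U x) \<partial>M) \<le> (\<integral>\<^sup>+x. exp (l * U x) \<partial>M)"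
    by (intro nn_integral_mono) (auto simp: indicator_def)
  also have "\<dots> \<le> ennreal (exp (l\<^sup>2 * c))"
    unfolding U_def using P T mgf l by (intro nn_integral_exp_average_le) auto
  finally have "ennreal (prob {x\<in>space M. t \<le> U x}) \<le> ennreal (exp (-l * t) * exp (l\<^sup>2 * c))"
    by (simp add: ennreal_mult mult_left_mono)
  also have "exp (-l * t) * exp (l\<^sup>2 * c) = exp (- t\<^sup>2 / (4 * c))"
    using c by (simp add: l_def field_simps power2_eq_square flip: exp_add)
  finally show ?thesis
    by (subst (asm) ennreal_le_iff) (auto simp: U_def)
qed

section \<open>Averaging over permutations\<close>

lemma sum_permutes_pair_eq:
  fixes H :: "nat \<Rightarrow> nat \<Rightarrow> real"
  assumes ab: "a < n" "b < n" "a \<noteq> b"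
  shows "(\<Sum>\<sigma>\<in>{\<sigma>. \<sigma> permutes {..<n}}. H (\<sigma> a) (\<sigma> b))
       = (\<Sum>\<sigma>\<in>{\<sigma>. \<sigma> permutes {..<n}}. H (\<sigma> 0) (\<sigma> 1))"
proof -
  define c where "c = Transposition.transpose 0 a b"
  define \<pi> where "\<pi> = Transposition.transpose 0 a \<circ> Transposition.transpose 1 c"
  have n: "2 \<le> n" using ab by arith
  have c: "c < n" "c \<noteq> 0"
    using ab by (auto simp: c_def Transposition.transpose_def)
  have \<pi>: "\<pi> permutes {..<n}"
    unfolding \<pi>_def using ab n c by (intro permutes_compose permutes_swap_id) auto
  have \<pi>01: "\<pi> 0 = a" "\<pi> 1 = b"
    using ab c by (auto simp: \<pi>_def c_def Transposition.transpose_def)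
  show ?thesis
    using \<pi>01 sum_permutations_compose_right[OF \<pi>, of "\<lambda>\<sigma>. H (\<sigma> 0) (\<sigma> 1)"] by simp
qed

lemma sum_off_diagonal_permute:
  fixes H :: "nat \<Rightarrow> nat \<Rightarrow> real"
  assumes \<sigma>: "\<sigma> permutes {..<n}"
  shows "(\<Sum>a<n. \<Sum>b\<in>{..<n} - {a}. H (\<sigma> a) (\<sigma> b)) = (\<Sum>a<n. \<Sum>b\<in>{..<n} - {a}. H a b)"
proof -
  have off: "(\<Sum>b\<in>{..<n} - {a}. G b) = (\<Sum>b<n. if b = a then 0 else G b)" for a and G :: "nat \<Rightarrow> real"
    by (simp add: sum.If_cases Diff_eq)
  have "(\<Sum>a<n. \<Sum>b<n. if b = a then 0 else H (\<sigma> a) (\<sigma> b))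
      = (\<Sum>a<n. \<Sum>b<n. if \<sigma> b = \<sigma> a then 0 else H (\<sigma> a) (\<sigma> b))"
    using permutes_inj[OF \<sigma>] by (simp add: inj_eq)
  also have "\<dots> = (\<Sum>a<n. \<Sum>b<n. if b = \<sigma> a then 0 else H (\<sigma> a) b)"
    using sum.permute[OF \<sigma>, of "\<lambda>b. if b = \<sigma> _ then 0 else H (\<sigma> _) b"] by (simp add: comp_def)
  also have "\<dots> = (\<Sum>a<n. \<Sum>b<n. if b = a then 0 else H a b)"
    using sum.permute[OF \<sigma>, of "\<lambda>a. \<Sum>b<n. if b = a then 0 else H a b"] by (simp add: comp_def)
  finally show ?thesis by (simp add: off)
qed

lemma sum_permutes_off_diagonal:
  fixes H :: "nat \<Rightarrow> nat \<Rightarrow> real"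
  shows "real n * (real n - 1) * (\<Sum>\<sigma>\<in>{\<sigma>. \<sigma> permutes {..<n}}. H (\<sigma> 0) (\<sigma> 1))
       = card {\<sigma>. \<sigma> permutes {..<n}} * (\<Sum>a<n. \<Sum>b\<in>{..<n} - {a}. H a b)"
proof -
  let ?P = "{\<sigma>. \<sigma> permutes {..<n}}"
  \<comment> \<open>both sides count \<open>\<Sum>\<sigma>. \<Sum>a \<noteq> b. H (\<sigma> a) (\<sigma> b)\<close>\<close>
  have "(\<Sum>\<sigma>\<in>?P. \<Sum>a<n. \<Sum>b\<in>{..<n} - {a}. H (\<sigma> a) (\<sigma> b))
      = (\<Sum>a<n. \<Sum>b\<in>{..<n} - {a}. \<Sum>\<sigma>\<in>?P. H (\<sigma> a) (\<sigma> b))"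
    by (subst sum.swap) (intro sum.cong refl sum.swap)
  also have "\<dots> = (\<Sum>a<n. \<Sum>b\<in>{..<n} - {a}. \<Sum>\<sigma>\<in>?P. H (\<sigma> 0) (\<sigma> 1))"
    by (intro sum.cong refl sum_permutes_pair_eq) auto
  also have "\<dots> = real n * (real n - 1) * (\<Sum>\<sigma>\<in>?P. H (\<sigma> 0) (\<sigma> 1))"
    by (cases n) simp_all
  finally have "real n * (real n - 1) * (\<Sum>\<sigma>\<in>?P. H (\<sigma> 0) (\<sigma> 1))
      = (\<Sum>\<sigma>\<in>?P. \<Sum>a<n. \<Sum>b\<in>{..<n} - {a}. H (\<sigma> a) (\<sigma> b))" ..
  also have "\<dots> = (\<Sum>\<sigma>\<in>?P. \<Sum>a<n. \<Sum>b\<in>{..<n} - {a}. H a b)"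
    by (rule sum.cong[OF refl], rule sum_off_diagonal_permute) simp
  finally show ?thesis
    by simp
qed

lemma average_permutes_pairs:
  fixes H :: "nat \<Rightarrow> nat \<Rightarrow> real" and n k :: nat
  assumes k: "k > 0" "2 * k \<le> n"
  shows "(\<Sum>\<sigma>\<in>{\<sigma>. \<sigma> permutes {..<n}}. (\<Sum>j<k. H (\<sigma> (2*j)) (\<sigma> (2*j+1))) / k)
            / card {\<sigma>. \<sigma> permutes {..<n}}
       = (\<Sum>a<n. \<Sum>b\<in>{..<n} - {a}. H a b) / (real n * (real n - 1))"
proof -
  let ?P = "{\<sigma>. \<sigma> permutes {..<n}}"
  define C where "C = (\<Sum>\<sigma>\<in>?P. H (\<sigma> 0) (\<sigma> 1))"
  have "(\<Sum>\<sigma>\<in>?P. (\<Sum>j<k. H (\<sigma> (2*j)) (\<sigma> (2*j+1))) / k)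
      = (\<Sum>\<sigma>\<in>?P. \<Sum>j<k. H (\<sigma> (2*j)) (\<sigma> (2*j+1))) / k"
    by (simp add: sum_divide_distrib)
  also have "\<dots> = (\<Sum>j<k. \<Sum>\<sigma>\<in>?P. H (\<sigma> (2*j)) (\<sigma> (2*j+1))) / k"
    by (rule arg_cong[where f="\<lambda>x. x / k"], rule sum.swap)
  also have "\<dots> = (\<Sum>j<k. C) / k"
    unfolding C_def using k
    by (intro arg_cong[where f="\<lambda>x. x / k"] sum.cong refl sum_permutes_pair_eq) auto
  also have "\<dots> = C"
    using k by simp
  finally have "(\<Sum>\<sigma>\<in>?P. (\<Sum>j<k. H (\<sigma> (2*j)) (\<sigma> (2*j+1))) / k) = C" .
  moreover have "id \<in> ?P"
    by (simp add: permutes_id)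
  then have "real (card ?P) \<noteq> 0"
    using finite_permutations[of "{..<n}"] by (metis card_0_eq empty_iff finite_lessThan of_nat_0_eq_iff)
  moreover have "real n * (real n - 1) \<noteq> 0"
    using k by auto
  ultimately show ?thesis
    using sum_permutes_off_diagonal[of n H] unfolding C_def[symmetric]
    by (simp add: frac_eq_eq mult.commute)
qed

section \<open>Independent samples: sample means and U-statistics\<close>

lemma (in prob_space) integral_ge_of_bounded:
  fixes g :: "'a \<Rightarrow> real"
  assumes "g \<in> borel_measurable M" "\<And>x. lo \<le> g x \<and> g x \<le> hi"
  shows "lo \<le> (\<integral>x. g x \<partial>M)"
proof (intro integral_ge_const integrable_const_bound[where B="max \<bar>lo\<bar> \<bar>hi\<bar>"] AE_I2)
  fix x
  show "lo \<le> g x" "norm (g x) \<le> max \<bar>lo\<bar> \<bar>hi\<bar>"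
    using assms(2)[of x] by (auto simp: abs_le_iff le_max_iff_disj)
qed fact

locale iid_sample = prob_space M for M :: "'w measure" +
  fixes D :: "'z measure" and Z :: "nat \<Rightarrow> 'w \<Rightarrow> 'z" and n :: nat
  assumes n_ge_2: "2 \<le> n"
    and Z_measurable_distr: "\<forall>i<n. Z i \<in> measurable M D \<and> distr M D (Z i) = D"
    and indep_Z: "indep_vars (\<lambda>_. D) Z {..<n}"
begin

lemma Z_measurable[measurable]: "i < n \<Longrightarrow> Z i \<in> measurable M D"
  using Z_measurable_distr by auto

lemma distr_Z: "i < n \<Longrightarrow> distr M D (Z i) = D"
  using Z_measurable_distr by auto

lemma prob_space_D: "prob_space D"
  using prob_space_distr[OF Z_measurable, of 0] distr_Z[of 0] n_ge_2 by simp

lemma prob_space_pair_D: "prob_space (D \<Otimes>\<^sub>M D)"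
  using prob_space_D by (intro prob_space_pair)

definition sample_mean :: "('z \<Rightarrow> real) \<Rightarrow> 'w \<Rightarrow> real" where
  "sample_mean g w = (\<Sum>i<n. g (Z i w)) / n"

definition ustat :: "('z \<times> 'z \<Rightarrow> real) \<Rightarrow> 'w \<Rightarrow> real" where
  "ustat h w = (\<Sum>i<n. \<Sum>j\<in>{..<n} - {i}. h (Z i w, Z j w)) / (real n * (real n - 1))"

lemma sample_mean_measurable[measurable]:
  "g \<in> borel_measurable D \<Longrightarrow> sample_mean g \<in> borel_measurable M"
  unfolding sample_mean_def
  by (intro borel_measurable_divide borel_measurable_sum borel_measurable_const) simp

lemma ustat_measurable[measurable]:
  "h \<in> borel_measurable (D \<Otimes>\<^sub>M D) \<Longrightarrow> ustat h \<in> borel_measurable M"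
  unfolding ustat_def
  by (intro borel_measurable_divide borel_measurable_sum borel_measurable_const) simp

lemma sample_mean_le: "(\<And>z. g z \<le> c) \<Longrightarrow> sample_mean g w \<le> c"
  using n_ge_2 sum_mono[of "{..<n}" "\<lambda>i. g (Z i w)" "\<lambda>_. c"]
  by (simp add: sample_mean_def divide_le_eq mult.commute)

lemma ustat_le: "(\<And>p. h p \<le> c) \<Longrightarrow> ustat h w \<le> c"
proof -
  assume "\<And>p. h p \<le> c"
  then have "(\<Sum>i<n. \<Sum>j\<in>{..<n} - {i}. h (Z i w, Z j w)) \<le> (\<Sum>i<n. \<Sum>j\<in>{..<n} - {i}. c)"
    by (intro sum_mono) auto
  also have "\<dots> = real n * (real n - 1) * c"
    using n_ge_2 by (simp add: of_nat_diff)
  finally show ?thesis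
    using n_ge_2 by (simp add: ustat_def divide_le_eq mult.commute)
qed

lemma sample_mean_uminus: "sample_mean (\<lambda>z. - g z) w = - sample_mean g w"
  by (simp add: sample_mean_def sum_negf)

lemma ustat_uminus: "ustat (\<lambda>p. - h p) w = - ustat h w"
  by (simp add: ustat_def sum_negf)
lemma integral_Z:
  fixes g :: "'z \<Rightarrow> real"
  assumes g[measurable]: "g \<in> borel_measurable D" and i: "i < n"
  shows "integral\<^sup>L M (\<lambda>w. g (Z i w)) = integral\<^sup>L D g"
    and "integrable D g \<Longrightarrow> integrable M (\<lambda>w. g (Z i w))"
  using integral_distr[OF Z_measurable[OF i] g] integrable_distr_eq[OF Z_measurable[OF i] g]
    distr_Z[OF i] by simp_all

lemma indep_var_Z_pair:
  assumes "i < n" "j < n" "i \<noteq> j"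
  shows "indep_var D (Z i) D (Z j)"
proof -
  have "indep_var (PiM {i} (\<lambda>_. D)) (\<lambda>\<omega>. restrict (\<lambda>i. Z i \<omega>) {i})
                  (PiM {j} (\<lambda>_. D)) (\<lambda>\<omega>. restrict (\<lambda>i. Z i \<omega>) {j})"
    using assms by (intro indep_var_restrict[OF indep_Z]) auto
  then have "indep_var D ((\<lambda>f. f i) \<circ> (\<lambda>\<omega>. restrict (\<lambda>i. Z i \<omega>) {i}))
                       D ((\<lambda>f. f j) \<circ> (\<lambda>\<omega>. restrict (\<lambda>i. Z i \<omega>) {j}))"
    by (rule indep_var_compose) (auto intro: measurable_component_singleton)
  then show ?thesis
    by (simp add: comp_def)
qed

lemma integral_Z_pair:
  fixes h :: "'z \<times> 'z \<Rightarrow> real"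
  assumes h[measurable]: "h \<in> borel_measurable (D \<Otimes>\<^sub>M D)" and ij: "i < n" "j < n" "i \<noteq> j"
  shows "integral\<^sup>L M (\<lambda>w. h (Z i w, Z j w)) = integral\<^sup>L (D \<Otimes>\<^sub>M D) h"
    and "integrable (D \<Otimes>\<^sub>M D) h \<Longrightarrow> integrable M (\<lambda>w. h (Z i w, Z j w))"
proof -
  have pair[measurable]: "(\<lambda>w. (Z i w, Z j w)) \<in> measurable M (D \<Otimes>\<^sub>M D)"
    using ij by measurable
  have "distr M D (Z i) \<Otimes>\<^sub>M distr M D (Z j) = distr M (D \<Otimes>\<^sub>M D) (\<lambda>w. (Z i w, Z j w))"
    using indep_var_Z_pair[OF ij] unfolding indep_var_distribution_eq by blast
  then have distr_pair: "distr M (D \<Otimes>\<^sub>M D) (\<lambda>w. (Z i w, Z j w)) = D \<Otimes>\<^sub>M D"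
    using distr_Z ij by simp
  show "integral\<^sup>L M (\<lambda>w. h (Z i w, Z j w)) = integral\<^sup>L (D \<Otimes>\<^sub>M D) h"
    using integral_distr[OF pair h] distr_pair by simp
  show "integrable (D \<Otimes>\<^sub>M D) h \<Longrightarrow> integrable M (\<lambda>w. h (Z i w, Z j w))"
    using integrable_distr_eq[OF pair h] distr_pair by simp
qed

lemma
  fixes g :: "'z \<Rightarrow> real"
  assumes g[measurable]: "g \<in> borel_measurable D" and "integrable D g"
  shows integrable_sample_mean: "integrable M (sample_mean g)"
    and integral_sample_mean: "integral\<^sup>L M (sample_mean g) = integral\<^sup>L D g"
proof -
  have int: "integrable M (\<lambda>w. g (Z i w))" if "i < n" for i
    using integral_Z(2)[OF g that] assms by simp
  then show "integrable M (sample_mean g)"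
    unfolding sample_mean_def by (intro integrable_divide Bochner_Integration.integrable_sum) auto
  have "integral\<^sup>L M (sample_mean g) = (\<Sum>i<n. integral\<^sup>L M (\<lambda>w. g (Z i w))) / n"
    unfolding sample_mean_def using int by (simp add: Bochner_Integration.integral_sum)
  also have "\<dots> = integral\<^sup>L D g"
    using integral_Z(1)[OF g] n_ge_2 by simp
  finally show "integral\<^sup>L M (sample_mean g) = integral\<^sup>L D g" .
qed

lemma
  fixes h :: "'z \<times> 'z \<Rightarrow> real"
  assumes h[measurable]: "h \<in> borel_measurable (D \<Otimes>\<^sub>M D)" and "integrable (D \<Otimes>\<^sub>M D) h"
  shows integrable_ustat: "integrable M (ustat h)"
    and integral_ustat: "integral\<^sup>L M (ustat h) = integral\<^sup>L (D \<Otimes>\<^sub>M D) h"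
proof -
  have int: "integrable M (\<lambda>w. h (Z i w, Z j w))" if "i \<in> {..<n}" "j \<in> {..<n} - {i}" for i j
    using integral_Z_pair(2)[OF h] assms that by simp
  then show "integrable M (ustat h)"
    unfolding ustat_def by (intro integrable_divide Bochner_Integration.integrable_sum) auto
  have "integral\<^sup>L M (ustat h)
      = (\<Sum>i<n. \<Sum>j\<in>{..<n} - {i}. integral\<^sup>L M (\<lambda>w. h (Z i w, Z j w))) / (real n * (real n - 1))"
  proof -
    have "integral\<^sup>L M (\<lambda>w. \<Sum>i<n. \<Sum>j\<in>{..<n} - {i}. h (Z i w, Z j w))
        = (\<Sum>i<n. integral\<^sup>L M (\<lambda>w. \<Sum>j\<in>{..<n} - {i}. h (Z i w, Z j w)))"
      using int by (intro Bochner_Integration.integral_sum Bochner_Integration.integrable_sum) auto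
    also have "\<dots> = (\<Sum>i<n. \<Sum>j\<in>{..<n} - {i}. integral\<^sup>L M (\<lambda>w. h (Z i w, Z j w)))"
      using int by (intro sum.cong refl Bochner_Integration.integral_sum) auto
    finally show ?thesis
      by (simp add: ustat_def[abs_def])
  qed
  also have "\<dots> = (\<Sum>i<n. \<Sum>j\<in>{..<n} - {i}. integral\<^sup>L (D \<Otimes>\<^sub>M D) h) / (real n * (real n - 1))"
    using integral_Z_pair(1)[OF h] by (intro arg_cong2[where f="(/)"] sum.cong refl) auto
  also have "\<dots> = integral\<^sup>L (D \<Otimes>\<^sub>M D) h"
    using n_ge_2 by (simp add: of_nat_diff)
  finally show "integral\<^sup>L M (ustat h) = integral\<^sup>L (D \<Otimes>\<^sub>M D) h" .
qed

lemma prob_sample_mean_ge_le_exp: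
  fixes g :: "'z \<Rightarrow> real"
  assumes g[measurable]: "g \<in> borel_measurable D" and bounds: "\<And>z. lo \<le> g z \<and> g z \<le> hi"
    and lohi: "lo < hi" and t: "t \<ge> 0"
  shows "prob {w\<in>space M. integral\<^sup>L D g + t \<le> sample_mean g w}
           \<le> exp (- 2 * real n * t\<^sup>2 / (hi - lo)\<^sup>2)"
proof -
  have n: "0 < n" using n_ge_2 by simp
  have distr_g: "distr M borel (\<lambda>w. g (Z i w)) = distr D borel g" if "i < n" for i
    using distr_distr[OF g Z_measurable[OF that]] distr_Z[OF that] by (simp add: comp_def)
  interpret Hoeffding: Hoeffding_ineq_iid M "{..<n}" "\<lambda>i w. g (Z i w)" "\<lambda>w. g (Z 0 w)" lo hi
      "expectation (\<lambda>w. g (Z 0 w))"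
  proof unfold_locales
    show "indep_vars (\<lambda>_. borel) (\<lambda>i w. g (Z i w)) {..<n}"
      by (rule indep_vars_compose2[OF indep_Z]) simp
    show "distr M borel (\<lambda>w. g (Z i w)) = distr M borel (\<lambda>w. g (Z 0 w))" if "i \<in> {..<n}" for i
      using that n distr_g by simp
    show "random_variable borel (\<lambda>w. g (Z 0 w))"
      using n by measurable
    show "AE w in M. g (Z 0 w) \<in> {lo..hi}"
      using bounds by simp
  qed simp
  have "expectation (\<lambda>w. g (Z 0 w)) = integral\<^sup>L D g"
    by (rule integral_Z(1)[OF g n])
  then have set_eq: "{w\<in>space M. integral\<^sup>L D g + t \<le> sample_mean g w}
      = {w\<in>space M. expectation (\<lambda>w. g (Z 0 w)) + t \<le> (\<Sum>i\<in>{..<n}. g (Z i w)) / card {..<n}}"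
    by (simp add: sample_mean_def)
  have "{..<n} \<noteq> {}"
    using n by (simp add: lessThan_empty_iff)
  from Hoeffding.Hoeffding_ineq_ge'[OF t lohi this] show ?thesis
    unfolding set_eq card_lessThan .
qed

lemma holds_up_to_sample_mean_le:
  fixes g :: "'z \<Rightarrow> real"
  assumes g[measurable]: "g \<in> borel_measurable D" and bounds: "\<And>z. lo \<le> g z \<and> g z \<le> hi"
    and \<theta>: "0 \<le> \<theta>"
  shows "holds_up_to M (exp (- \<theta>))
           (\<lambda>w. sample_mean g w \<le> integral\<^sup>L D g + (hi - lo) * sqrt (\<theta> / (2 * real n)))"
proof (rule holds_up_to_le_add_of_tail_bound[where lo=lo and hi=hi])
  show "sample_mean g w \<le> hi" for w
    using bounds by (intro sample_mean_le) blast
  show "lo \<le> integral\<^sup>L D g"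
    using prob_space.integral_ge_of_bounded[OF prob_space_D g bounds] .
  have "lo \<le> hi"
    using bounds[of undefined] by linarith
  then show t: "0 \<le> (hi - lo) * sqrt (\<theta> / (2 * real n))"
    using \<theta> by simp
  assume lohi: "lo < hi"
  have "((hi - lo) * sqrt (\<theta> / (2 * real n)))\<^sup>2 = (hi - lo)\<^sup>2 * (\<theta> / (2 * real n))"
    using \<theta> by (simp add: power_mult_distrib)
  then have "- 2 * real n * ((hi - lo) * sqrt (\<theta> / (2 * real n)))\<^sup>2 / (hi - lo)\<^sup>2 = - \<theta>"
    using lohi n_ge_2 by (simp add: field_simps)
  then show "prob {w\<in>space M. integral\<^sup>L D g + (hi - lo) * sqrt (\<theta> / (2 * real n)) \<le> sample_mean g w}
      \<le> exp (- \<theta>)"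
    using prob_sample_mean_ge_le_exp[OF g bounds lohi t] by simp
qed simp_all

lemma holds_up_to_sample_mean_ge:
  fixes g :: "'z \<Rightarrow> real"
  assumes g[measurable]: "g \<in> borel_measurable D" and bounds: "\<And>z. lo \<le> g z \<and> g z \<le> hi"
    and \<theta>: "0 \<le> \<theta>"
  shows "holds_up_to M (exp (- \<theta>))
           (\<lambda>w. integral\<^sup>L D g - (hi - lo) * sqrt (\<theta> / (2 * real n)) \<le> sample_mean g w)"
proof -
  have "holds_up_to M (exp (- \<theta>)) (\<lambda>w. sample_mean (\<lambda>z. - g z) w
      \<le> integral\<^sup>L D (\<lambda>z. - g z) + (- lo - - hi) * sqrt (\<theta> / (2 * real n)))"
    using bounds by (intro holds_up_to_sample_mean_le \<theta>) auto
  then show ?thesis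
    by (rule holds_up_to_mono) (auto simp: sample_mean_uminus)
qed

definition block_mean :: "('z \<times> 'z \<Rightarrow> real) \<Rightarrow> (nat \<Rightarrow> nat) \<Rightarrow> 'w \<Rightarrow> real" where
  "block_mean h \<sigma> w = (\<Sum>j<n div 2. h (Z (\<sigma> (2*j)) w, Z (\<sigma> (2*j+1)) w)) / (n div 2)"

lemma ustat_eq_average_block_mean:
  "ustat h w = (\<Sum>\<sigma>\<in>{\<sigma>. \<sigma> permutes {..<n}}. block_mean h \<sigma> w) / card {\<sigma>. \<sigma> permutes {..<n}}"
proof -
  have "0 < n div 2" "2 * (n div 2) \<le> n"
    using n_ge_2 by simp_all
  from average_permutes_pairs[OF this, of "\<lambda>a b. h (Z a w, Z b w)"] show ?thesis
    unfolding ustat_def block_mean_def by (rule sym)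
qed

lemma block_indices:
  assumes \<sigma>: "\<sigma> permutes {..<n}" and j: "j < n div 2"
  shows "\<sigma> (2*j) < n" "\<sigma> (2*j+1) < n" "\<sigma> (2*j) \<noteq> \<sigma> (2*j+1)"
proof -
  have "2*j < n" "2*j+1 < n"
    using j by linarith+
  then show "\<sigma> (2*j) < n" "\<sigma> (2*j+1) < n"
    using permutes_in_image[OF \<sigma>] by simp_all
  show "\<sigma> (2*j) \<noteq> \<sigma> (2*j+1)"
    using permutes_inj[OF \<sigma>] by (simp add: inj_eq)
qed

lemma block_mean_measurable[measurable]:
  assumes "\<sigma> permutes {..<n}" "h \<in> borel_measurable (D \<Otimes>\<^sub>M D)"
  shows "block_mean h \<sigma> \<in> borel_measurable M"
proof -
  have "(\<lambda>w. h (Z (\<sigma> (2*j)) w, Z (\<sigma> (2*j+1)) w)) \<in> borel_measurable M" if "j < n div 2" for j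
    using block_indices[OF assms(1) that] assms(2) by measurable
  then show ?thesis
    unfolding block_mean_def by (intro borel_measurable_divide borel_measurable_sum) auto
qed

lemma nn_integral_exp_block_mean_le:
  fixes h :: "'z \<times> 'z \<Rightarrow> real"
  assumes \<sigma>: "\<sigma> permutes {..<n}" and h[measurable]: "h \<in> borel_measurable (D \<Otimes>\<^sub>M D)"
    and bounds: "\<And>p. lo \<le> h p \<and> h p \<le> hi" and l: "l > 0"
  shows "(\<integral>\<^sup>+w. ennreal (exp (l * (block_mean h \<sigma> w - integral\<^sup>L (D \<Otimes>\<^sub>M D) h))) \<partial>M)
           \<le> ennreal (exp (l\<^sup>2 * (hi - lo)\<^sup>2 / (8 * real (n div 2))))"
proof -
  define k where "k = n div 2"
  have k: "0 < k" using n_ge_2 by (simp add: k_def)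
  define X where "X = (\<lambda>j w. h (Z (\<sigma> (2*j)) w, Z (\<sigma> (2*j+1)) w) / k)"
  define K where "K = (\<lambda>j. {\<sigma> (2*j), \<sigma> (2*j+1)})"
  note idx = block_indices[OF \<sigma>, folded k_def]
  \<comment> \<open>the blocks use disjoint pairs of sample points, hence are independent\<close>
  have "disjoint_family_on K {..<k}"
    unfolding disjoint_family_on_def K_def
    using permutes_inj[OF \<sigma>] by (auto simp: inj_eq)
  then have "indep_vars (\<lambda>j. PiM (K j) (\<lambda>_. D)) (\<lambda>j \<omega>. restrict (\<lambda>i. Z i \<omega>) (K j)) {..<k}"
    using idx by (intro indep_vars_restrict[OF indep_Z]) (auto simp: K_def)
  then have "indep_vars (\<lambda>_. borel)
      (\<lambda>j \<omega>. (\<lambda>f. h (f (\<sigma> (2*j)), f (\<sigma> (2*j+1))) / k) (restrict (\<lambda>i. Z i \<omega>) (K j))) {..<k}"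
    by (rule indep_vars_compose2) (auto simp: K_def)
  then have "indep_vars (\<lambda>_. borel) X {..<k}"
    by (rule indep_vars_cong[THEN iffD1, rotated -1]) (auto simp: X_def K_def fun_eq_iff)
  then interpret Hoeffding: Hoeffding_ineq M "{..<k}" X "\<lambda>_. lo / k" "\<lambda>_. hi / k"
      "\<Sum>j<k. expectation (X j)"
    by unfold_locales (use bounds k in \<open>auto simp: X_def divide_right_mono\<close>)
  have "expectation (X j) = integral\<^sup>L (D \<Otimes>\<^sub>M D) h / k" if "j < k" for j
    using integral_Z_pair(1)[OF h idx[OF that]] by (simp add: X_def)
  then have "block_mean h \<sigma> w - integral\<^sup>L (D \<Otimes>\<^sub>M D) h = (\<Sum>j<k. X j w) - (\<Sum>j<k. expectation (X j))"
    for w using k by (simp add: block_mean_def X_def k_def[symmetric] sum_divide_distrib)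
  then have "(\<integral>\<^sup>+w. ennreal (exp (l * (block_mean h \<sigma> w - integral\<^sup>L (D \<Otimes>\<^sub>M D) h))) \<partial>M)
      \<le> ennreal (exp (l\<^sup>2 * (\<Sum>j<k. (hi / k - lo / k)\<^sup>2) / 8))"
    using Hoeffding.Hoeffding_mgf_le[OF l] by simp
  also have "l\<^sup>2 * (\<Sum>j<k. (hi / k - lo / k)\<^sup>2) / 8 = l\<^sup>2 * (hi - lo)\<^sup>2 / (8 * k)"
    using k by (simp add: power2_eq_square field_simps)
  finally show ?thesis
    by (simp add: k_def)
qed
lemma prob_ustat_ge_le_exp:
  fixes h :: "'z \<times> 'z \<Rightarrow> real"
  assumes h[measurable]: "h \<in> borel_measurable (D \<Otimes>\<^sub>M D)" and bounds: "\<And>p. lo \<le> h p \<and> h p \<le> hi"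
    and lohi: "lo < hi" and t: "t \<ge> 0"
  shows "prob {w\<in>space M. integral\<^sup>L (D \<Otimes>\<^sub>M D) h + t \<le> ustat h w}
           \<le> exp (- 2 * real (n div 2) * t\<^sup>2 / (hi - lo)\<^sup>2)"
proof -
  define P where "P = {\<sigma>. \<sigma> permutes {..<n}}"
  define c where "c = (hi - lo)\<^sup>2 / (8 * real (n div 2))"
  have c: "c > 0" using lohi n_ge_2 by (simp add: c_def)
  have P: "finite P" "P \<noteq> {}"
    using finite_permutations[of "{..<n}"] permutes_id[of "{..<n}"] unfolding P_def by blast+
  define T where "T = (\<lambda>\<sigma> w. block_mean h \<sigma> w - integral\<^sup>L (D \<Otimes>\<^sub>M D) h)"
  have T: "T \<sigma> \<in> borel_measurable M" if "\<sigma> \<in> P" for \<sigma>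
    unfolding T_def using that by (simp add: P_def)
  have "(\<Sum>\<sigma>\<in>P. T \<sigma> w) / card P = ustat h w - integral\<^sup>L (D \<Otimes>\<^sub>M D) h" for w
    using P by (simp add: T_def P_def sum_subtractf ustat_eq_average_block_mean diff_divide_distrib)
  then have "{w\<in>space M. integral\<^sup>L (D \<Otimes>\<^sub>M D) h + t \<le> ustat h w} = {w\<in>space M. t \<le> (\<Sum>\<sigma>\<in>P. T \<sigma> w) / card P}"
    by auto
  also have "prob \<dots> \<le> exp (- t\<^sup>2 / (4 * c))"
    using P T nn_integral_exp_block_mean_le[OF _ h bounds] c t
    by (intro prob_average_ge_le_exp) (auto simp: T_def P_def c_def)
  also have "- t\<^sup>2 / (4 * c) = - 2 * real (n div 2) * t\<^sup>2 / (hi - lo)\<^sup>2"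
    using lohi n_ge_2 by (simp add: c_def field_simps)
  finally show ?thesis .
qed

lemma holds_up_to_ustat_le:
  fixes h :: "'z \<times> 'z \<Rightarrow> real"
  assumes h[measurable]: "h \<in> borel_measurable (D \<Otimes>\<^sub>M D)"
    and bounds: "\<And>p. lo \<le> h p \<and> h p \<le> hi" and \<theta>: "0 \<le> \<theta>"
  shows "holds_up_to M (exp (1 - \<theta>))
           (\<lambda>w. ustat h w \<le> integral\<^sup>L (D \<Otimes>\<^sub>M D) h + (hi - lo) * sqrt (\<theta> / n))"
proof (rule holds_up_to_le_add_of_tail_bound[where lo=lo and hi=hi])
  show "ustat h w \<le> hi" for w
    using bounds by (intro ustat_le) blast
  show "lo \<le> integral\<^sup>L (D \<Otimes>\<^sub>M D) h"
    using prob_space.integral_ge_of_bounded[OF prob_space_pair_D h bounds] .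
  have "lo \<le> hi"
    using bounds[of undefined] by linarith
  then show t: "0 \<le> (hi - lo) * sqrt (\<theta> / n)"
    using \<theta> by simp
  assume lohi: "lo < hi" and "(hi - lo) * sqrt (\<theta> / n) < hi - lo"
  then have \<theta>_n: "\<theta> / n < 1"
    by simp
  have "((hi - lo) * sqrt (\<theta> / n))\<^sup>2 = (hi - lo)\<^sup>2 * (\<theta> / n)"
    using \<theta> by (simp add: power_mult_distrib)
  then have exponent: "- 2 * real (n div 2) * ((hi - lo) * sqrt (\<theta> / n))\<^sup>2 / (hi - lo)\<^sup>2
      = - 2 * real (n div 2) * (\<theta> / n)"
    using lohi by (simp add: field_simps)
  have "prob {w\<in>space M. integral\<^sup>L (D \<Otimes>\<^sub>M D) h + (hi - lo) * sqrt (\<theta> / n) \<le> ustat h w}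
      \<le> exp (- 2 * real (n div 2) * (\<theta> / n))"
    using prob_ustat_ge_le_exp[OF h bounds lohi t] unfolding exponent .
  also have "\<dots> \<le> exp (1 - \<theta>)"
  proof -
    \<comment> \<open>\<open>2 (n div 2) \<ge> n - 1\<close>, and \<open>\<theta> / n < 1\<close> absorbs the difference\<close>
    have "real n - 1 \<le> 2 * real (n div 2)"
      by linarith
    then have "(real n - 1) * (\<theta> / n) \<le> 2 * real (n div 2) * (\<theta> / n)"
      using \<theta> by (intro mult_right_mono) auto
    moreover have "(real n - 1) * (\<theta> / n) = \<theta> - \<theta> / n"
      using n_ge_2 by (simp add: field_simps)
    ultimately show ?thesis
      using \<theta>_n by simp
  qed
  finally show "prob {w\<in>space M. integral\<^sup>L (D \<Otimes>\<^sub>M D) h + (hi - lo) * sqrt (\<theta> / n) \<le> ustat h w}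
      \<le> exp (1 - \<theta>)" .
qed simp_all

lemma holds_up_to_ustat_ge:
  fixes h :: "'z \<times> 'z \<Rightarrow> real"
  assumes h[measurable]: "h \<in> borel_measurable (D \<Otimes>\<^sub>M D)"
    and bounds: "\<And>p. lo \<le> h p \<and> h p \<le> hi" and \<theta>: "0 \<le> \<theta>"
  shows "holds_up_to M (exp (1 - \<theta>))
           (\<lambda>w. integral\<^sup>L (D \<Otimes>\<^sub>M D) h - (hi - lo) * sqrt (\<theta> / n) \<le> ustat h w)"
proof -
  have "holds_up_to M (exp (1 - \<theta>)) (\<lambda>w. ustat (\<lambda>p. - h p) w
      \<le> integral\<^sup>L (D \<Otimes>\<^sub>M D) (\<lambda>p. - h p) + (- lo - - hi) * sqrt (\<theta> / n))"
    using bounds by (intro holds_up_to_ustat_le \<theta>) auto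
  then show ?thesis
    by (rule holds_up_to_mono) (auto simp: ustat_uminus)
qed

end

section \<open>Perturbing a ratio\<close>

definition ratio_deviation_bound :: "real \<Rightarrow> real \<Rightarrow> real \<Rightarrow> real \<Rightarrow> real" where
  "ratio_deviation_bound S c a b = S / c - (S - a) / (c + b)"

lemma ratio_deviation_bound_eq:
  assumes "0 < c" "0 \<le> b"
  shows "ratio_deviation_bound S c a b = S * b / (c * (c + b)) + a / (c + b)"
proof -
  have "S / c - (S - a) / (c + b) = (S * (c + b) - (S - a) * c) / (c * (c + b))"
    using assms by (simp add: diff_frac_eq)
  also have "S * (c + b) - (S - a) * c = S * b + c * a"
    by (simp add: algebra_simps)
  also have "(S * b + c * a) / (c * (c + b)) = S * b / (c * (c + b)) + a / (c + b)"
    using assms by (simp add: add_divide_distrib)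
  finally show ?thesis
    by (simp add: ratio_deviation_bound_def)
qed

lemma ratio_deviation_bound_mono:
  assumes "0 \<le> x" "x \<le> S" "0 < c" "c \<le> y" "0 \<le> a" "a \<le> a'" "0 \<le> b"
  shows "ratio_deviation_bound x y a b \<le> ratio_deviation_bound S c a' b"
proof -
  have "x * b / (y * (y + b)) \<le> S * b / (c * (c + b))"
    using assms by (intro frac_le mult_mono mult_right_mono) auto
  moreover have "a / (y + b) \<le> a / (c + b)"
    using assms by (intro divide_left_mono) auto
  moreover have "a / (c + b) \<le> a' / (c + b)"
    using assms by (intro divide_right_mono) auto
  ultimately show ?thesis
    using assms by (simp add: ratio_deviation_bound_eq)
qed

lemma ratio_le_perturbed_ratio_add:
  assumes c: "0 < c" "c \<le> y" and x: "0 \<le> x" "x \<le> S" and ab: "0 \<le> a" "0 \<le> b"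
    and s: "x - a \<le> s" "0 \<le> s" and s': "c \<le> s'" "s' \<le> y + b"
  shows "x / y \<le> s / s' + ratio_deviation_bound S c a b"
proof (cases "x \<le> a")
  case True
  have "x / y \<le> x / c"
    using c x by (intro divide_left_mono) auto
  also have "x / c = ratio_deviation_bound x c x b"
    by (simp add: ratio_deviation_bound_def)
  also have "\<dots> \<le> ratio_deviation_bound S c a b"
    using True c x ab by (intro ratio_deviation_bound_mono) auto
  finally show ?thesis
    using s s' c by (smt (verit) divide_nonneg_nonneg)
next
  case False
  have "(x - a) / (y + b) \<le> (x - a) / s'"
    using False s' c by (intro divide_left_mono) auto
  also have "\<dots> \<le> s / s'"
    using s s' c by (intro divide_right_mono) auto
  finally have "x / y \<le> s / s' + ratio_deviation_bound x y a b"
    by (simp add: ratio_deviation_bound_def)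
  also have "ratio_deviation_bound x y a b \<le> ratio_deviation_bound S c a b"
    using c x ab by (intro ratio_deviation_bound_mono) auto
  finally show ?thesis
    by simp
qed

lemma perturbed_ratio_le_ratio_add:
  assumes c: "0 < c" "c \<le> y" and x: "0 \<le> x" "x \<le> S" and ab: "0 \<le> a" "0 \<le> b"
    and s: "s \<le> x + a" "s \<le> S" "0 \<le> s" and s': "c \<le> s'" "y - b \<le> s'"
  shows "s / s' \<le> x / y + ratio_deviation_bound S c a b"
proof -
  define m where "m = min S (x + a)"
  have m: "s \<le> m" "x \<le> m" "m \<le> S" "m - x \<le> a"
    using s x ab by (auto simp: m_def)
  have "s / s' \<le> m / s'"
    using m s' c by (intro divide_right_mono) auto
  moreover have "m / s' - x / y \<le> m / c - x / (c + b)"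
  proof (cases "y \<le> c + b")
    case True
    have "m / s' \<le> m / c"
      using m s' c x by (intro divide_left_mono) auto
    moreover have "x / (c + b) \<le> x / y"
      using True x c by (intro divide_left_mono) auto
    ultimately show ?thesis
      by linarith
  next
    case False
    then have u: "c < y - b" by simp
    have "m / s' \<le> m / (y - b)"
      using m s' x u c by (intro divide_left_mono) auto
    moreover have "x * ((y - b - c) / ((c + b) * y)) \<le> m * ((y - b - c) / (c * (y - b)))"
    proof (rule mult_mono)
      show "(y - b - c) / ((c + b) * y) \<le> (y - b - c) / (c * (y - b))"
      proof (rule divide_left_mono)
      show "c * (y - b) \<le> (c + b) * y"
        using c ab u by (simp add: algebra_simps)
      show "0 < (c + b) * y * (c * (y - b))"
        using c ab u by simp
    qed (use u in simp)
    qed (use m x u c ab in auto)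
    moreover have "m / c - m / (y - b) = m * ((y - b - c) / (c * (y - b)))"
      using c u by (simp add: field_simps)
    moreover have "x / (c + b) - x / y = x * ((y - b - c) / ((c + b) * y))"
      using c ab u by (simp add: field_simps)
    ultimately show ?thesis
      by linarith
  qed
  moreover have "m / c - x / (c + b) = ratio_deviation_bound m c (m - x) b"
    by (simp add: ratio_deviation_bound_def)
  moreover have "\<dots> \<le> ratio_deviation_bound S c a b"
    using m x c ab by (intro ratio_deviation_bound_mono) auto
  ultimately show ?thesis
    by linarith
qed

lemma exp_tail_budget_le:
  fixes \<delta> :: real
  assumes "0 < \<delta>"
  shows "exp (- ln (6 / \<delta>)) + exp (1 - ln (6 / \<delta>)) \<le> 2 / 3 * \<delta>"
proof -
  have "exp (1 - ln (6 / \<delta>)) = exp 1 * (\<delta> / 6)"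
    using assms by (simp add: exp_diff)
  also have "\<dots> \<le> 3 * (\<delta> / 6)"
    using exp_le assms by (intro mult_right_mono) auto
  finally show ?thesis
    using assms by (simp add: exp_minus)
qed

section \<open>Model reliance of a single model\<close>

lemma le_SUP_of_maximum:
  fixes \<phi> :: "'a \<Rightarrow> 'b :: conditionally_complete_lattice"
  assumes "\<exists>f\<in>A. \<forall>g\<in>A. \<phi> g \<le> \<phi> f" "g \<in> A"
  shows "\<phi> g \<le> (SUP f\<in>A. \<phi> f)"
  using assms by (intro cSUP_upper) (auto simp: bdd_above_def)

lemma INF_le_of_minimum:
  fixes \<phi> :: "'a \<Rightarrow> 'b :: conditionally_complete_lattice"
  assumes "\<exists>f\<in>A. \<forall>g\<in>A. \<phi> f \<le> \<phi> g" "g \<in> A"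
  shows "(INF f\<in>A. \<phi> f) \<le> \<phi> g"
  using assms by (intro cINF_lower) (auto simp: bdd_below_def)

locale bounded_loss_model = iid_sample M D Z n
  for M :: "'w measure" and D :: "('y \<times> 'x1 \<times> 'x2) measure" and Z n +
  fixes L :: "'f \<Rightarrow> 'y \<times> 'x1 \<times> 'x2 \<Rightarrow> real" and f :: 'f and B_ind b_orig B_switch :: real
  assumes integrable_orig: "integrable D (L f)"
    and integrable_switch: "integrable (D \<Otimes>\<^sub>M D) (\<lambda>p. L f (switch_pt (fst p) (snd p)))"
    and bounded_ind: "\<And>z. 0 \<le> L f z \<and> L f z \<le> B_ind"
    and bounded_orig: "AE w in M. 0 < b_orig \<and> b_orig \<le> emp_orig n L Z f w"
    and bounded_switch: "AE w in M. emp_switch n L Z f w \<le> B_switch"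
begin

abbreviation switch_loss :: "('y \<times> 'x1 \<times> 'x2) \<times> ('y \<times> 'x1 \<times> 'x2) \<Rightarrow> real" where
  "switch_loss p \<equiv> L f (switch_pt (fst p) (snd p))"

lemma loss_measurable[measurable]: "L f \<in> borel_measurable D"
  using integrable_orig by (rule borel_measurable_integrable)

lemma switch_loss_measurable[measurable]: "switch_loss \<in> borel_measurable (D \<Otimes>\<^sub>M D)"
  using integrable_switch by (rule borel_measurable_integrable)

lemma emp_orig_eq: "emp_orig n L Z f w = sample_mean (L f) w"
  by (simp add: emp_orig_def sample_mean_def)

lemma emp_switch_eq: "emp_switch n L Z f w = ustat switch_loss w"
  by (simp add: emp_switch_def ustat_def)

lemma e_orig_eq: "e_orig D L f = integral\<^sup>L D (L f)"
  by (simp add: e_orig_def)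

lemma e_switch_eq: "e_switch D L f = integral\<^sup>L (D \<Otimes>\<^sub>M D) switch_loss"
  by (simp add: e_switch_def)

lemma B_ind_nonneg: "0 \<le> B_ind"
  using bounded_ind[of undefined] by linarith

lemma b_orig_le_e_orig: "b_orig \<le> e_orig D L f"
proof -
  have "b_orig \<le> integral\<^sup>L M (sample_mean (L f))"
    using bounded_orig integrable_sample_mean[OF loss_measurable integrable_orig]
    by (intro integral_ge_const) (auto simp: emp_orig_eq elim: eventually_mono)
  then show ?thesis
    by (simp add: e_orig_eq integral_sample_mean integrable_orig)
qed

lemma e_switch_nonneg: "0 \<le> e_switch D L f"
  unfolding e_switch_eq using bounded_ind by (intro Bochner_Integration.integral_nonneg) auto

lemma e_switch_le_B_switch: "e_switch D L f \<le> B_switch"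
proof -
  have "integral\<^sup>L M (ustat switch_loss) \<le> B_switch"
    using bounded_switch integrable_ustat[OF switch_loss_measurable integrable_switch]
    by (intro integral_le_const) (auto simp: emp_switch_eq)
  then show ?thesis
    by (simp add: e_switch_eq integral_ustat integrable_switch)
qed

lemma emp_switch_nonneg: "0 \<le> emp_switch n L Z f w"
  unfolding emp_switch_def using bounded_ind n_ge_2 by (intro divide_nonneg_nonneg sum_nonneg) auto

lemma holds_up_to_MR_le_emp_MR:
  assumes "0 < \<delta>" "\<delta> \<le> 6"
  defines "a \<equiv> B_ind * sqrt (ln (6 / \<delta>) / n)" and "b \<equiv> B_ind * sqrt (ln (6 / \<delta>) / (2 * real n))"
  shows "holds_up_to M (2 / 3 * \<delta>)
           (\<lambda>w. MR D L f \<le> emp_MR n L Z f w + ratio_deviation_bound B_switch b_orig a b)"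
proof -
  have \<theta>: "0 \<le> ln (6 / \<delta>)"
    using assms by simp
  have "holds_up_to M (exp (- ln (6 / \<delta>))) (\<lambda>w. emp_orig n L Z f w \<le> e_orig D L f + b)"
    using holds_up_to_sample_mean_le[OF loss_measurable _ \<theta>, of 0 B_ind] bounded_ind
    by (simp add: emp_orig_eq e_orig_eq b_def)
  moreover have "holds_up_to M (exp (1 - ln (6 / \<delta>))) (\<lambda>w. e_switch D L f - a \<le> emp_switch n L Z f w)"
    using holds_up_to_ustat_ge[OF switch_loss_measurable _ \<theta>, of 0 B_ind] bounded_ind
    by (simp add: emp_switch_eq e_switch_eq a_def)
  moreover have "holds_up_to M 0 (\<lambda>w. 0 < b_orig \<and> b_orig \<le> emp_orig n L Z f w)"
    by (rule holds_up_to_AE[OF bounded_orig])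
  ultimately have "holds_up_to M (exp (- ln (6 / \<delta>)) + exp (1 - ln (6 / \<delta>)) + 0)
      (\<lambda>w. (emp_orig n L Z f w \<le> e_orig D L f + b \<and> e_switch D L f - a \<le> emp_switch n L Z f w)
        \<and> 0 < b_orig \<and> b_orig \<le> emp_orig n L Z f w)"
    by (intro holds_up_to_conj)
  moreover have "0 \<le> a" "0 \<le> b"
    using B_ind_nonneg \<theta> by (simp_all add: a_def b_def)
  ultimately show ?thesis
    using exp_tail_budget_le[OF \<open>0 < \<delta>\<close>] b_orig_le_e_orig e_switch_nonneg e_switch_le_B_switch
      emp_switch_nonneg
    unfolding MR_def emp_MR_def
    by (elim holds_up_to_mono) (auto intro!: ratio_le_perturbed_ratio_add)
qed

lemma holds_up_to_emp_MR_le_MR: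
  assumes "0 < \<delta>" "\<delta> \<le> 6"
  defines "a \<equiv> B_ind * sqrt (ln (6 / \<delta>) / n)" and "b \<equiv> B_ind * sqrt (ln (6 / \<delta>) / (2 * real n))"
  shows "holds_up_to M (2 / 3 * \<delta>)
           (\<lambda>w. emp_MR n L Z f w \<le> MR D L f + ratio_deviation_bound B_switch b_orig a b)"
proof -
  have \<theta>: "0 \<le> ln (6 / \<delta>)"
    using assms by simp
  have "holds_up_to M (exp (- ln (6 / \<delta>))) (\<lambda>w. e_orig D L f - b \<le> emp_orig n L Z f w)"
    using holds_up_to_sample_mean_ge[OF loss_measurable _ \<theta>, of 0 B_ind] bounded_ind
    by (simp add: emp_orig_eq e_orig_eq b_def)
  moreover have "holds_up_to M (exp (1 - ln (6 / \<delta>))) (\<lambda>w. emp_switch n L Z f w \<le> e_switch D L f + a)"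
    using holds_up_to_ustat_le[OF switch_loss_measurable _ \<theta>, of 0 B_ind] bounded_ind
    by (simp add: emp_switch_eq e_switch_eq a_def)
  moreover have "holds_up_to M 0 (\<lambda>w. (0 < b_orig \<and> b_orig \<le> emp_orig n L Z f w)
      \<and> emp_switch n L Z f w \<le> B_switch)"
    using bounded_orig bounded_switch by (intro holds_up_to_AE) auto
  ultimately have "holds_up_to M (exp (- ln (6 / \<delta>)) + exp (1 - ln (6 / \<delta>)) + 0)
      (\<lambda>w. (e_orig D L f - b \<le> emp_orig n L Z f w \<and> emp_switch n L Z f w \<le> e_switch D L f + a)
        \<and> (0 < b_orig \<and> b_orig \<le> emp_orig n L Z f w) \<and> emp_switch n L Z f w \<le> B_switch)"
    by (intro holds_up_to_conj)
  moreover have "0 \<le> a" "0 \<le> b"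
    using B_ind_nonneg \<theta> by (simp_all add: a_def b_def)
  ultimately show ?thesis
    using exp_tail_budget_le[OF \<open>0 < \<delta>\<close>] b_orig_le_e_orig e_switch_nonneg e_switch_le_B_switch
      emp_switch_nonneg
    unfolding MR_def emp_MR_def
    by (elim holds_up_to_mono) (auto intro!: perturbed_ratio_le_ratio_add)
qed

lemma holds_up_to_emp_rashomon:
  assumes "f \<in> F" and integrable_ref: "integrable D (L fref)"
    and bounded_ref: "\<And>z. \<bar>L f z - L fref z\<bar> \<le> B_ref"
    and rashomon: "e_orig D L f \<le> e_orig D L fref + eps" and "0 < \<delta>" "\<delta> \<le> 3"
  shows "holds_up_to M (\<delta> / 3)
           (\<lambda>w. f \<in> emp_rashomon F n L Z fref (eps + 2 * B_ref * sqrt (ln (3 / \<delta>) / (2 * real n))) w)"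
proof -
  have \<theta>: "0 \<le> ln (3 / \<delta>)"
    using assms by simp
  have [measurable]: "L fref \<in> borel_measurable D"
    using integrable_ref by (rule borel_measurable_integrable)
  have "- B_ref \<le> L f z - L fref z \<and> L f z - L fref z \<le> B_ref" for z
    using bounded_ref[of z] by linarith
  from holds_up_to_sample_mean_le[where g="\<lambda>z. L f z - L fref z", OF _ this \<theta>]
  have "holds_up_to M (\<delta> / 3) (\<lambda>w. emp_orig n L Z f w - emp_orig n L Z fref w
      \<le> e_orig D L f - e_orig D L fref + 2 * B_ref * sqrt (ln (3 / \<delta>) / (2 * real n)))"
    using assms integrable_orig
    by (simp add: emp_orig_def sample_mean_def e_orig_def sum_subtractf diff_divide_distrib exp_minus)
  then show ?thesis
    by (rule holds_up_to_mono) (use rashomon \<open>f \<in> F\<close> in \<open>auto simp: emp_rashomon_def\<close>)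
qed


lemma holds_up_to_MCR_plus_le:
  assumes f_max: "f \<in> rashomon F D L fref eps" "\<forall>g\<in>rashomon F D L fref eps. MR D L g \<le> MR D L f"
    and emp_max: "\<forall>e\<ge>0. \<forall>w\<in>space M. \<exists>f'\<in>emp_rashomon F n L Z fref e w.
                    \<forall>g\<in>emp_rashomon F n L Z fref e w. emp_MR n L Z g w \<le> emp_MR n L Z f' w"
    and integrable_ref: "integrable D (L fref)" and bounded_ref: "\<And>z. \<bar>L f z - L fref z\<bar> \<le> B_ref"
    and eps: "0 \<le> eps" and \<delta>: "0 < \<delta>" "\<delta> \<le> 3"
  shows "holds_up_to M \<delta> (\<lambda>w. \<not> MCR_plus F D L fref eps
           > emp_MCR_plus F n L Z fref (eps + 2 * B_ref * sqrt (ln (3 / \<delta>) / (2 * real n))) w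
             + ratio_deviation_bound B_switch b_orig
                 (B_ind * sqrt (ln (6 / \<delta>) / n)) (B_ind * sqrt (ln (6 / \<delta>) / (2 * real n))))"
    (is "holds_up_to M \<delta> (\<lambda>w. \<not> _ > emp_MCR_plus F n L Z fref ?eps1 w + ?Q1)")
proof -
  have "0 \<le> B_ref"
    using bounded_ref[of undefined] by linarith
  then have eps1: "0 \<le> ?eps1"
    using eps \<delta> by simp
  have "holds_up_to M (\<delta> / 3 + 2 / 3 * \<delta>)
      (\<lambda>w. f \<in> emp_rashomon F n L Z fref ?eps1 w \<and> MR D L f \<le> emp_MR n L Z f w + ?Q1)"
    using f_max(1) integrable_ref bounded_ref \<delta>
    by (intro holds_up_to_conj holds_up_to_emp_rashomon holds_up_to_MR_le_emp_MR)
      (auto simp: rashomon_def)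
  then show ?thesis
  proof (rule holds_up_to_mono)
    fix w
    assume w: "w \<in> space M"
      and good: "f \<in> emp_rashomon F n L Z fref ?eps1 w \<and> MR D L f \<le> emp_MR n L Z f w + ?Q1"
    have "MCR_plus F D L fref eps = MR D L f"
      unfolding MCR_plus_def using f_max by (intro cSup_eq_maximum) auto
    moreover have "emp_MR n L Z f w \<le> emp_MCR_plus F n L Z fref ?eps1 w"
      using emp_max[rule_format, OF eps1 w] good unfolding emp_MCR_plus_def
      by (intro le_SUP_of_maximum) auto
    ultimately show "\<not> MCR_plus F D L fref eps > emp_MCR_plus F n L Z fref ?eps1 w + ?Q1"
      using good by linarith
  qed simp
qed

lemma holds_up_to_MCR_minus_ge:
  assumes f_min: "f \<in> rashomon F D L fref eps" "\<forall>g\<in>rashomon F D L fref eps. MR D L f \<le> MR D L g"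
    and emp_min: "\<forall>e\<ge>0. \<forall>w\<in>space M. \<exists>f'\<in>emp_rashomon F n L Z fref e w.
                    \<forall>g\<in>emp_rashomon F n L Z fref e w. emp_MR n L Z f' w \<le> emp_MR n L Z g w"
    and integrable_ref: "integrable D (L fref)" and bounded_ref: "\<And>z. \<bar>L f z - L fref z\<bar> \<le> B_ref"
    and eps: "0 \<le> eps" and \<delta>: "0 < \<delta>" "\<delta> \<le> 3"
  shows "holds_up_to M \<delta> (\<lambda>w. \<not> MCR_minus F D L fref eps
           < emp_MCR_minus F n L Z fref (eps + 2 * B_ref * sqrt (ln (3 / \<delta>) / (2 * real n))) w
             - ratio_deviation_bound B_switch b_orig
                 (B_ind * sqrt (ln (6 / \<delta>) / n)) (B_ind * sqrt (ln (6 / \<delta>) / (2 * real n))))"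
    (is "holds_up_to M \<delta> (\<lambda>w. \<not> _ < emp_MCR_minus F n L Z fref ?eps1 w - ?Q1)")
proof -
  have "0 \<le> B_ref"
    using bounded_ref[of undefined] by linarith
  then have eps1: "0 \<le> ?eps1"
    using eps \<delta> by simp
  have "holds_up_to M (\<delta> / 3 + 2 / 3 * \<delta>)
      (\<lambda>w. f \<in> emp_rashomon F n L Z fref ?eps1 w \<and> emp_MR n L Z f w \<le> MR D L f + ?Q1)"
    using f_min(1) integrable_ref bounded_ref \<delta>
    by (intro holds_up_to_conj holds_up_to_emp_rashomon holds_up_to_emp_MR_le_MR)
      (auto simp: rashomon_def)
  then show ?thesis
  proof (rule holds_up_to_mono)
    fix w
    assume w: "w \<in> space M"
      and good: "f \<in> emp_rashomon F n L Z fref ?eps1 w \<and> emp_MR n L Z f w \<le> MR D L f + ?Q1"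
    have "MCR_minus F D L fref eps = MR D L f"
      unfolding MCR_minus_def using f_min by (intro cInf_eq_minimum) auto
    moreover have "emp_MCR_minus F n L Z fref ?eps1 w \<le> emp_MR n L Z f w"
      using emp_min[rule_format, OF eps1 w] good unfolding emp_MCR_minus_def
      by (intro INF_le_of_minimum) auto
    ultimately show "\<not> MCR_minus F D L fref eps < emp_MCR_minus F n L Z fref ?eps1 w - ?Q1"
      using good by linarith
  qed simp
qed

end

theorem theorem6:
  fixes M :: "'w measure"
    and D :: "('y \<times> 'x1 \<times> 'x2) measure"
    and Z :: "nat \<Rightarrow> 'w \<Rightarrow> 'y \<times> 'x1 \<times> 'x2"
    and F :: "('x1 \<times> 'x2 \<Rightarrow> 'y) set"
    and L :: "('x1 \<times> 'x2 \<Rightarrow> 'y) \<Rightarrow> 'y \<times> 'x1 \<times> 'x2 \<Rightarrow> real"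
    and fref fplus fminus :: "'x1 \<times> 'x2 \<Rightarrow> 'y"
    and n :: nat
    and eps delta B_ind B_ref b_orig B_switch :: real
  assumes M: "prob_space M"
    and D: "prob_space D"
    and n: "n \<ge> 2"
    and Z_meas: "\<forall>i<n. Z i \<in> measurable M D \<and> distr M D (Z i) = D"
    and Z_indep: "prob_space.indep_vars M (\<lambda>_. D) Z {..<n}"
    and L_nonneg: "\<forall>f\<in>F. \<forall>z. 0 \<le> L f z"
    and L_int_orig: "\<forall>f\<in>F. integrable D (L f)"
    and L_int_switch: "\<forall>f\<in>F. integrable (D \<Otimes>\<^sub>M D) (\<lambda>p. L f (switch_pt (fst p) (snd p)))"
    and fref: "fref \<in> F"
    and max_exists: "\<forall>e\<ge>0. \<forall>w\<in>space M. \<exists>f\<in>emp_rashomon F n L Z fref e w.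
                        \<forall>g\<in>emp_rashomon F n L Z fref e w. emp_MR n L Z g w \<le> emp_MR n L Z f w"
    and min_exists: "\<forall>e\<ge>0. \<forall>w\<in>space M. \<exists>f\<in>emp_rashomon F n L Z fref e w.
                        \<forall>g\<in>emp_rashomon F n L Z fref e w. emp_MR n L Z f w \<le> emp_MR n L Z g w"
    and eps: "eps \<ge> 0"
    and delta: "0 < delta" "delta < 1"
    and fplus: "fplus \<in> rashomon F D L fref eps"
               "\<forall>g\<in>rashomon F D L fref eps. MR D L g \<le> MR D L fplus"
    and fminus: "fminus \<in> rashomon F D L fref eps"
               "\<forall>g\<in>rashomon F D L fref eps. MR D L fminus \<le> MR D L g"
    and bounded_ind: "\<forall>f\<in>{fplus, fminus}. \<forall>z. 0 \<le> L f z \<and> L f z \<le> B_ind"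
    and bounded_ref: "\<forall>f\<in>{fplus, fminus}. \<forall>z. \<bar>L f z - L fref z\<bar> \<le> B_ref"
    and bounded_orig: "\<forall>f\<in>{fplus, fminus}.
                         (AE w in M. 0 < b_orig \<and> b_orig \<le> emp_orig n L Z f w)"
    and bounded_switch: "\<forall>f\<in>{fplus, fminus}. (AE w in M. emp_switch n L Z f w \<le> B_switch)"
  shows "let eps1 = eps + 2 * B_ref * sqrt (ln (3 / delta) / (2 * real n));
             Q1 = B_switch / b_orig
                  - (B_switch - B_ind * sqrt (ln (6 / delta) / real n))
                    / (b_orig + B_ind * sqrt (ln (6 / delta) / (2 * real n)))
         in (\<exists>A\<in>sets M. {w \<in> space M. MCR_plus F D L fref eps > emp_MCR_plus F n L Z fref eps1 w + Q1} \<subseteq> A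
                        \<and> measure M A \<le> delta)
          \<and> (\<exists>A\<in>sets M. {w \<in> space M. MCR_minus F D L fref eps < emp_MCR_minus F n L Z fref eps1 w - Q1} \<subseteq> A
                        \<and> measure M A \<le> delta)"
proof -
  have sample: "iid_sample M D Z n"
    by (rule iid_sample.intro[OF M iid_sample_axioms.intro[OF n Z_meas Z_indep]])
  have model: "bounded_loss_model M D Z n L f B_ind b_orig B_switch" if "f \<in> {fplus, fminus}" for f
    using that fplus(1) fminus(1) L_int_orig L_int_switch bounded_ind bounded_orig bounded_switch
    by (intro bounded_loss_model.intro[OF sample] bounded_loss_model_axioms.intro)
      (auto simp: rashomon_def)
  have "holds_up_to M delta (\<lambda>w. \<not> MCR_plus F D L fref eps
      > emp_MCR_plus F n L Z fref (eps + 2 * B_ref * sqrt (ln (3 / delta) / (2 * real n))) w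
        + ratio_deviation_bound B_switch b_orig
            (B_ind * sqrt (ln (6 / delta) / n)) (B_ind * sqrt (ln (6 / delta) / (2 * real n))))"
    by (rule bounded_loss_model.holds_up_to_MCR_plus_le[OF model fplus max_exists])
      (use fref L_int_orig bounded_ref eps delta in auto)
  moreover have "holds_up_to M delta (\<lambda>w. \<not> MCR_minus F D L fref eps
      < emp_MCR_minus F n L Z fref (eps + 2 * B_ref * sqrt (ln (3 / delta) / (2 * real n))) w
        - ratio_deviation_bound B_switch b_orig
            (B_ind * sqrt (ln (6 / delta) / n)) (B_ind * sqrt (ln (6 / delta) / (2 * real n))))"
    by (rule bounded_loss_model.holds_up_to_MCR_minus_ge[OF model fminus min_exists])
      (use fref L_int_orig bounded_ref eps delta in auto)
  ultimately show ?thesis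
    unfolding Let_def ratio_deviation_bound_def by (intro conjI holds_up_to_exceptional_set)
qed

end
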